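(* If $T\in\mathbf{A}$ is a compact operator, then $T=0$.
   Context: For $\lambda=(t,\omega)\in\mathbb{R}^d\times\mathbb{R}^d$, $U_{(t,\omega)}f(x)=e^{i\langle\omega,x\rangle}f(x-t)$ on $L^2(\mathbb{R}^d)$. $\mathcal{A}$ is the algebra of operators $\sum_{\lambda\in\mathbb{R}^{2d}}c_\lambda U_\lambda$ with $\sum_\lambda|c_\lambda|<\infty$, and $\mathbf{A}$ is its closure in operator norm in $B(L^2(\mathbb{R}^d))$ (a $C^*$-algebra). *)

theory Defs
  imports "HOL-Analysis.Analysis"
begin

text \<open>Concrete model of L^2(R^d) via representatives: functions on a Euclidean space
  (R^d, d = DIM('a)) to complex numbers, with Lebesgue measure.\<close>

definition L2 :: "('a::euclidean_space \<Rightarrow> complex) set" where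
  "L2 = {f. f \<in> borel_measurable lebesgue \<and> integrable lebesgue (\<lambda>x. (cmod (f x))^2)}"

definition L2norm :: "('a::euclidean_space \<Rightarrow> complex) \<Rightarrow> real" where
  "L2norm f = sqrt (\<integral>x. (cmod (f x))^2 \<partial>lebesgue)"

definition tf_shift :: "'a::euclidean_space \<times> 'a \<Rightarrow> ('a \<Rightarrow> complex) \<Rightarrow> 'a \<Rightarrow> complex" where
  "tf_shift l f x = exp (\<i> * of_real (snd l \<bullet> x)) * f (x - fst l)"

definition l1_op :: "('a::euclidean_space \<times> 'a \<Rightarrow> complex) \<Rightarrow> ('a \<Rightarrow> complex) \<Rightarrow> 'a \<Rightarrow> complex" where
  "l1_op c f x = (\<Sum>\<^sub>\<infinity>l. c l * tf_shift l f x)"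

text \<open>T lies in the operator-norm closure of the algebra of absolutely summable
  combinations of time-frequency shifts.\<close>
definition in_A :: "(('a::euclidean_space \<Rightarrow> complex) \<Rightarrow> ('a \<Rightarrow> complex)) \<Rightarrow> bool" where
  "in_A T \<longleftrightarrow> (\<forall>f\<in>L2. T f \<in> L2) \<and>
     (\<forall>e>0. \<exists>c. (\<lambda>l. norm (c l)) summable_on UNIV \<and>
        (\<forall>f\<in>L2. (\<lambda>x. T f x - l1_op c f x) \<in> L2 \<and>
                 L2norm (\<lambda>x. T f x - l1_op c f x) \<le> e * L2norm f))"

definition compact_op :: "(('a::euclidean_space \<Rightarrow> complex) \<Rightarrow> ('a \<Rightarrow> complex)) \<Rightarrow> bool" where
  "compact_op T \<longleftrightarrow> (\<forall>F::nat \<Rightarrow> ('a \<Rightarrow> complex). (\<forall>n. F n \<in> L2 \<and> L2norm (F n) \<le> 1) \<longrightarrow>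
     (\<exists>r g. strict_mono r \<and> g \<in> L2 \<and>
        (\<lambda>n. L2norm (\<lambda>x. T (F (r n)) x - g x)) \<longlonglongrightarrow> 0))"

end

(*
  Approximate T within e in operator norm by S = sum_l c_l U_l with sum_l |c_l| < oo.  A pure
  translation V_nu = U_(nu,0) commutes with U_(t,omega) up to the phase exp(i <omega,nu>).  By
  Dirichlet's simultaneous approximation theorem there are arbitrarily long nu for which the
  phases of the finitely many dominant frequencies are all close to 1, and then
  ||T (V_nu f) - V_nu (S f)|| <= 4 e ||f||.  For a sequence of such nu_j -> oo, compactness of T
  yields a limit point of T (V_nu_j f), which is then within O(e) of arbitrarily far-apart
  translates of S f.  Since an L^2 function is almost orthogonal to its far translates,
  ||S f|| = O(e); hence ||T f|| = O(e) for every e > 0, i.e. T f = 0.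
*)
theory Submission
  imports Defs
begin

section \<open>Square-integrable functions\<close>

definition L2sq :: "('a::euclidean_space \<Rightarrow> complex) \<Rightarrow> ennreal" where
  "L2sq g = (\<integral>\<^sup>+x. ennreal ((cmod (g x))\<^sup>2) \<partial>lebesgue)"

lemma L2_iff_L2sq: "g \<in> L2 \<longleftrightarrow> g \<in> borel_measurable lebesgue \<and> L2sq g < \<infinity>"
  unfolding L2_def L2sq_def by (auto simp: integrable_iff_bounded)

lemma L2_imp_measurable: "g \<in> L2 \<Longrightarrow> g \<in> borel_measurable lebesgue"
  by (simp add: L2_def)

lemma L2norm_nonneg: "0 \<le> L2norm g"
  by (simp add: L2norm_def)

lemma L2sq_eq_L2norm:
  assumes "g \<in> L2"
  shows "L2sq g = ennreal ((L2norm g)\<^sup>2)"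
proof -
  have int: "integrable lebesgue (\<lambda>x. (cmod (g x))\<^sup>2)" using assms by (simp add: L2_def)
  have "L2sq g = ennreal (\<integral>x. (cmod (g x))\<^sup>2 \<partial>lebesgue)"
    unfolding L2sq_def by (rule nn_integral_eq_integral[OF int]) auto
  moreover have "(\<integral>x. (cmod (g x))\<^sup>2 \<partial>lebesgue) \<ge> 0" by (rule integral_nonneg_AE) auto
  ultimately show ?thesis by (simp add: L2norm_def)
qed

lemma ennreal_square_le_imp_le:
  fixes x :: ennreal
  assumes "x\<^sup>2 \<le> ennreal (r\<^sup>2)" "0 \<le> r"
  shows "x \<le> ennreal r"
proof (cases x)
  case (real s)
  with assms(1) have "ennreal (s\<^sup>2) \<le> ennreal (r\<^sup>2)" by (simp only: ennreal_power)
  then have "s\<^sup>2 \<le> r\<^sup>2" by (simp add: ennreal_le_iff)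
  then have "s \<le> r" using assms(2) by (rule power2_le_imp_le)
  then show ?thesis using real by (simp add: ennreal_leI)
next
  case top
  with assms(1) show ?thesis by (simp add: power2_eq_square top_unique)
qed

lemma L2sq_le_imp_L2norm_le:
  assumes "g \<in> borel_measurable lebesgue" "L2sq g \<le> ennreal (r\<^sup>2)"
  shows "g \<in> L2" and "L2norm g \<le> \<bar>r\<bar>"
proof -
  show g: "g \<in> L2"
    using assms le_less_trans[OF assms(2) ennreal_less_top] by (simp add: L2_iff_L2sq)
  then have "(L2norm g)\<^sup>2 \<le> \<bar>r\<bar>\<^sup>2" using assms(2) by (simp add: L2sq_eq_L2norm)
  then show "L2norm g \<le> \<bar>r\<bar>" by (rule power2_le_imp_le) simp
qed

lemma L2norm_eq_0_iff:
  assumes "g \<in> L2"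
  shows "L2norm g = 0 \<longleftrightarrow> (AE x in lebesgue. g x = 0)"
proof -
  have "L2norm g = 0 \<longleftrightarrow> L2sq g = 0"
    using L2norm_nonneg[of g] by (simp add: L2sq_eq_L2norm[OF assms])
  also have "\<dots> \<longleftrightarrow> (AE x in lebesgue. g x = 0)"
    unfolding L2sq_def using assms by (subst nn_integral_0_iff_AE) (auto simp: L2_def)
  finally show ?thesis .
qed

lemma L2norm_mono:
  assumes "a \<in> L2" "b \<in> L2" "\<And>x. cmod (a x) \<le> cmod (b x)"
  shows "L2norm a \<le> L2norm b"
  unfolding L2norm_def using assms
  by (auto simp: L2_def intro!: real_sqrt_le_mono integral_mono power_mono)

lemma L2norm_minus_commute: "L2norm (\<lambda>x. a x - b x) = L2norm (\<lambda>x. b x - a x)"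
  by (simp add: L2norm_def norm_minus_commute)

lemma L2norm_cmult: "L2norm (\<lambda>x. a * g x) = cmod a * L2norm g"
  by (simp add: L2norm_def norm_mult power_mult_distrib real_sqrt_mult)

lemma L2_cmult: "g \<in> L2 \<Longrightarrow> (\<lambda>x. a * g x) \<in> L2"
  unfolding L2_def by (auto simp: norm_mult power_mult_distrib)

lemma Cauchy_Schwarz_L2:
  assumes "a \<in> L2" "b \<in> L2"
  shows "(\<integral>\<^sup>+x. ennreal (cmod (a x)) * ennreal (cmod (b x)) \<partial>lebesgue) \<le> ennreal (L2norm a * L2norm b)"
proof -
  have "(\<integral>\<^sup>+x. ennreal (cmod (a x)) * ennreal (cmod (b x)) \<partial>lebesgue)\<^sup>2
      \<le> (\<integral>\<^sup>+x. ennreal (cmod (a x)) ^ 2 \<partial>lebesgue) * (\<integral>\<^sup>+x. ennreal (cmod (b x)) ^ 2 \<partial>lebesgue)"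
    using assms by (intro Cauchy_Schwarz_nn_integral) (auto simp: L2_def)
  also have "\<dots> = ennreal ((L2norm a * L2norm b)\<^sup>2)"
    using assms by (simp add: L2sq_def ennreal_power L2sq_eq_L2norm[symmetric] power_mult_distrib ennreal_mult)
  finally show ?thesis by (rule ennreal_square_le_imp_le) (simp add: L2norm_nonneg)
qed

lemma Minkowski_L2:
  assumes a: "a \<in> L2" and b: "b \<in> L2"
  shows "(\<lambda>x. a x + b x) \<in> L2" and "L2norm (\<lambda>x. a x + b x) \<le> L2norm a + L2norm b"
proof -
  have [measurable]: "a \<in> borel_measurable lebesgue" "b \<in> borel_measurable lebesgue"
    using a b by (auto simp: L2_def)
  let ?a = "\<lambda>x. ennreal (cmod (a x))" and ?b = "\<lambda>x. ennreal (cmod (b x))"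
  have "L2sq (\<lambda>x. a x + b x) \<le> (\<integral>\<^sup>+x. (?a x)\<^sup>2 + (?b x)\<^sup>2 + 2 * (?a x * ?b x) \<partial>lebesgue)"
    unfolding L2sq_def
  proof (intro nn_integral_mono)
    fix x
    have "ennreal ((cmod (a x + b x))\<^sup>2) \<le> ennreal ((cmod (a x) + cmod (b x))\<^sup>2)"
      by (intro ennreal_leI power_mono norm_triangle_ineq) simp
    then show "ennreal ((cmod (a x + b x))\<^sup>2) \<le> (?a x)\<^sup>2 + (?b x)\<^sup>2 + 2 * (?a x * ?b x)"
      by (simp add: power2_sum ennreal_plus ennreal_mult ennreal_power mult.assoc)
  qed
  also have "\<dots> = L2sq a + L2sq b + 2 * (\<integral>\<^sup>+x. ?a x * ?b x \<partial>lebesgue)"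
    by (simp add: L2sq_def nn_integral_add nn_integral_cmult ennreal_power)
  also have "\<dots> \<le> ennreal ((L2norm a)\<^sup>2) + ennreal ((L2norm b)\<^sup>2) + 2 * ennreal (L2norm a * L2norm b)"
    unfolding L2sq_eq_L2norm[OF a] L2sq_eq_L2norm[OF b]
    using Cauchy_Schwarz_L2[OF a b] by (intro add_left_mono mult_left_mono) auto
  also have "\<dots> = ennreal ((L2norm a + L2norm b)\<^sup>2)"
  proof -
    have "0 \<le> L2norm a" "0 \<le> L2norm b" by (simp_all add: L2norm_nonneg)
    then show ?thesis
      by (simp add: power2_sum ennreal_mult mult.assoc)
  qed
  finally have "L2sq (\<lambda>x. a x + b x) \<le> ennreal ((L2norm a + L2norm b)\<^sup>2)" .
  moreover have "(\<lambda>x. a x + b x) \<in> borel_measurable lebesgue" by measurable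
  moreover have "\<bar>L2norm a + L2norm b\<bar> = L2norm a + L2norm b"
    using L2norm_nonneg[of a] L2norm_nonneg[of b] by simp
  ultimately show "(\<lambda>x. a x + b x) \<in> L2" "L2norm (\<lambda>x. a x + b x) \<le> L2norm a + L2norm b"
    using L2sq_le_imp_L2norm_le[of "\<lambda>x. a x + b x" "L2norm a + L2norm b"] by simp_all
qed

lemmas L2_add = Minkowski_L2(1)
lemmas L2norm_add_le = Minkowski_L2(2)

lemma L2_uminus: "g \<in> L2 \<Longrightarrow> (\<lambda>x. - g x) \<in> L2"
  unfolding L2_def by auto

lemma L2norm_uminus: "L2norm (\<lambda>x. - g x) = L2norm g"
  by (simp add: L2norm_def)

lemma L2_diff: "a \<in> L2 \<Longrightarrow> b \<in> L2 \<Longrightarrow> (\<lambda>x. a x - b x) \<in> L2"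
  using L2_add[of a "\<lambda>x. - b x"] L2_uminus[of b] by simp

lemma L2norm_diff_le: "a \<in> L2 \<Longrightarrow> b \<in> L2 \<Longrightarrow> L2norm (\<lambda>x. a x - b x) \<le> L2norm a + L2norm b"
  using L2norm_add_le[of a "\<lambda>x. - b x"] L2_uminus[of b] L2norm_uminus[of b] by simp

lemma L2norm_triangle:
  "a \<in> L2 \<Longrightarrow> b \<in> L2 \<Longrightarrow> c \<in> L2 \<Longrightarrow> L2norm (\<lambda>x. a x - c x) \<le> L2norm (\<lambda>x. a x - b x) + L2norm (\<lambda>x. b x - c x)"
  using L2norm_add_le[of "\<lambda>x. a x - b x" "\<lambda>x. b x - c x"] by (simp add: L2_diff)

section \<open>Translations\<close>

lemma lebesgue_translation:
  fixes t :: "'a::euclidean_space"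
  shows "(\<lambda>x. x + t) \<in> lebesgue \<rightarrow>\<^sub>M lebesgue"
    and "distr lebesgue lebesgue (\<lambda>x. x + t) = lebesgue"
proof -
  have eq: "(\<lambda>x. t + (\<Sum>j\<in>Basis. (1 * (x \<bullet> j)) *\<^sub>R j)) = (\<lambda>x::'a. x + t)"
    by (auto simp: euclidean_representation)
  show "(\<lambda>x. x + t) \<in> lebesgue \<rightarrow>\<^sub>M lebesgue"
    using lebesgue_affine_measurable[of "\<lambda>_. 1" t] eq by simp
  have "lebesgue = density (distr lebesgue lebesgue (\<lambda>x::'a. x + t)) (\<lambda>_. 1)"
    using lebesgue_affine_euclidean[of "\<lambda>_. 1" t] eq by simp
  then show "distr lebesgue lebesgue (\<lambda>x. x + t) = lebesgue"
    by (simp add: density_1)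
qed

lemma measurable_translate [measurable]:
  fixes t :: "'a::euclidean_space"
  assumes "g \<in> borel_measurable lebesgue"
  shows "(\<lambda>x. g (x - t)) \<in> borel_measurable lebesgue"
  using measurable_compose[OF lebesgue_translation(1)[of "- t"] assms] by simp

lemma nn_integral_translate:
  fixes t :: "'a::euclidean_space"
  assumes "h \<in> borel_measurable lebesgue"
  shows "(\<integral>\<^sup>+x. h (x - t) \<partial>lebesgue) = (\<integral>\<^sup>+x. h x \<partial>lebesgue)"
proof -
  have "(\<integral>\<^sup>+x. h x \<partial>lebesgue) = (\<integral>\<^sup>+x. h x \<partial>distr lebesgue lebesgue (\<lambda>x. x + - t))"
    by (simp only: lebesgue_translation(2))
  also have "\<dots> = (\<integral>\<^sup>+x. h (x - t) \<partial>lebesgue)"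
    using assms by (subst nn_integral_distr[OF lebesgue_translation(1)]) auto
  finally show ?thesis by simp
qed

lemma L2sq_translate: "g \<in> borel_measurable lebesgue \<Longrightarrow> L2sq (\<lambda>x. g (x - t)) = L2sq g"
  unfolding L2sq_def by (rule nn_integral_translate) measurable

lemma L2_translate: "g \<in> L2 \<Longrightarrow> (\<lambda>x. g (x - t)) \<in> L2"
  by (auto simp: L2_iff_L2sq L2sq_translate intro: measurable_translate)

lemma L2norm_translate: "g \<in> L2 \<Longrightarrow> L2norm (\<lambda>x. g (x - t)) = L2norm g"
  using L2sq_translate[of g t] L2sq_eq_L2norm[of g] L2sq_eq_L2norm[OF L2_translate[of g t]]
  by (simp add: L2_imp_measurable L2norm_nonneg)

lemma measurable_norm_lebesgue [measurable]: "norm \<in> borel_measurable (lebesgue :: 'a::euclidean_space measure)"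
  by (rule measurable_completion) simp

lemma L2_outside_ball:
  assumes "h \<in> L2"
  shows "(\<lambda>x. if r \<le> norm x then h x else 0) \<in> L2"
proof -
  have "(\<lambda>x. if r \<le> norm x then h x else 0) \<in> borel_measurable lebesgue"
    using L2_imp_measurable[OF assms] by measurable
  moreover have "L2sq (\<lambda>x. if r \<le> norm x then h x else 0) \<le> L2sq h"
    unfolding L2sq_def by (intro nn_integral_mono) simp
  ultimately show ?thesis
    using assms by (auto simp: L2_iff_L2sq intro: le_less_trans)
qed

lemma L2norm_outside_ball_small:
  assumes "h \<in> L2" "\<epsilon> > 0"
  obtains r :: real where "L2norm (\<lambda>x. if r \<le> norm x then h x else 0) < \<epsilon>"
proof -
  define t where "t n x = ennreal ((cmod (if real n \<le> norm x then h x else 0))\<^sup>2)" for n :: nat and x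
  have h: "h \<in> borel_measurable lebesgue" "L2sq h < \<infinity>" using assms(1) by (auto simp: L2_iff_L2sq)
  have t_meas: "t n \<in> borel_measurable lebesgue" for n unfolding t_def using h(1) by measurable
  have "decseq t" by (intro decseq_SucI le_funI) (simp add: t_def)
  moreover have "(\<integral>\<^sup>+x. t 0 x \<partial>lebesgue) < \<infinity>"
    using h(2) unfolding L2sq_def by (rule le_less_trans[rotated]) (auto simp: t_def intro!: nn_integral_mono)
  ultimately have "(\<integral>\<^sup>+x. (INF n. t n x) \<partial>lebesgue) = (INF n. \<integral>\<^sup>+x. t n x \<partial>lebesgue)"
    using t_meas by (intro nn_integral_monotone_convergence_INF_decseq)
  moreover have "(INF n. t n x) = 0" for x
  proof -
    obtain n :: nat where "norm x < n" using reals_Archimedean2 by blast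
    then have "t n x = 0" by (simp add: t_def)
    moreover have "(INF n. t n x) \<le> t n x" by (rule INF_lower) simp
    ultimately show ?thesis by simp
  qed
  ultimately have "(INF n. \<integral>\<^sup>+x. t n x \<partial>lebesgue) < ennreal (\<epsilon>\<^sup>2)" using assms(2) by simp
  then obtain n where "L2sq (\<lambda>x. if real n \<le> norm x then h x else 0) < ennreal (\<epsilon>\<^sup>2)"
    by (auto simp: INF_less_iff L2sq_def t_def)
  then have "(L2norm (\<lambda>x. if real n \<le> norm x then h x else 0))\<^sup>2 < \<epsilon>\<^sup>2"
    using L2sq_eq_L2norm[OF L2_outside_ball[OF assms(1)]] by (simp add: ennreal_less_iff)
  then show ?thesis
    using assms(2) by (intro that[of "real n"]) (simp add: power_less_imp_less_base)
qed

text \<open>Split \<open>h\<close> into a part supported in the ball of radius \<open>r\<close> and a small remainder; for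
  \<open>2 r < norm s\<close> the first part and its translate by \<open>s\<close> have disjoint supports.\<close>
lemma L2norm_le_far_translate_diff:
  assumes h: "h \<in> L2" and "\<epsilon> > 0"
  obtains R :: real where "\<And>s. R < norm s \<Longrightarrow> L2norm h \<le> L2norm (\<lambda>x. h (x - s) - h x) + \<epsilon>"
proof -
  obtain r where r: "L2norm (\<lambda>x. if r \<le> norm x then h x else 0) < \<epsilon> / 3"
    using L2norm_outside_ball_small[OF h, of "\<epsilon> / 3"] \<open>\<epsilon> > 0\<close> by auto
  define b where "b x = (if r \<le> norm x then h x else 0)" for x
  define a where "a x = h x - b x" for x
  have b: "b \<in> L2" unfolding b_def using h by (rule L2_outside_ball)
  have a: "a \<in> L2" unfolding a_def using h b by (rule L2_diff)
  show ?thesis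
  proof (rule that)
    fix s :: 'a assume s: "2 * r < norm s"
    have "cmod (a x) \<le> cmod (a (x - s) - a x)" for x
    proof -
      have "a (x - s) = 0 \<or> a x = 0"
        using norm_triangle_ineq4[of x "x - s"] s by (auto simp: a_def b_def)
      then show ?thesis by auto
    qed
    then have "L2norm a \<le> L2norm (\<lambda>x. a (x - s) - a x)"
      using a by (intro L2norm_mono L2_diff L2_translate)
    also have "(\<lambda>x. a (x - s) - a x) = (\<lambda>x. (h (x - s) - h x) - (b (x - s) - b x))"
      by (simp add: a_def algebra_simps)
    also have "L2norm \<dots> \<le> L2norm (\<lambda>x. h (x - s) - h x) + L2norm (\<lambda>x. b (x - s) - b x)"
      using h b by (intro L2norm_diff_le L2_diff L2_translate)
    also have "L2norm (\<lambda>x. b (x - s) - b x) \<le> 2 * L2norm b"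
      using L2norm_diff_le[OF L2_translate[OF b, of s] b] L2norm_translate[OF b] by simp
    finally have "L2norm a \<le> L2norm (\<lambda>x. h (x - s) - h x) + 2 * L2norm b" by simp
    moreover have "L2norm h \<le> L2norm a + L2norm b"
      using L2norm_add_le[OF a b] by (simp add: a_def)
    ultimately show "L2norm h \<le> L2norm (\<lambda>x. h (x - s) - h x) + \<epsilon>"
      using r unfolding b_def by linarith
  qed
qed

lemma L2norm_translate_diff_shift:
  assumes "h \<in> L2"
  shows "L2norm (\<lambda>x. h (x - a) - h (x - b)) = L2norm (\<lambda>x. h (x - (a - b)) - h x)"
proof -
  have "(\<lambda>x. h (x - (a - b)) - h x) \<in> L2" using assms by (intro L2_diff L2_translate)
  from L2norm_translate[OF this, of b]
  have "L2norm (\<lambda>x. h (x - b - (a - b)) - h (x - b)) = L2norm (\<lambda>x. h (x - (a - b)) - h x)" .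
  moreover have "(\<lambda>x. h (x - b - (a - b)) - h (x - b)) = (\<lambda>x. h (x - a) - h (x - b))"
    by (simp add: diff_diff_eq)
  ultimately show ?thesis by simp
qed

lemma far_translates_near_imp_L2norm_le:
  assumes h: "h \<in> L2" and g: "g \<in> L2"
    and near: "\<And>R. \<exists>a b. R < norm (a - b) \<and>
      L2norm (\<lambda>x. h (x - a) - g x) \<le> K \<and> L2norm (\<lambda>x. h (x - b) - g x) \<le> K"
  shows "L2norm h \<le> 2 * K"
proof (rule field_le_epsilon)
  fix \<epsilon> :: real assume "\<epsilon> > 0"
  obtain R where R: "\<And>s. R < norm s \<Longrightarrow> L2norm h \<le> L2norm (\<lambda>x. h (x - s) - h x) + \<epsilon>"
    using L2norm_le_far_translate_diff[OF h \<open>\<epsilon> > 0\<close>] by blast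
  obtain a b where ab: "R < norm (a - b)"
    "L2norm (\<lambda>x. h (x - a) - g x) \<le> K" "L2norm (\<lambda>x. h (x - b) - g x) \<le> K"
    using near by blast
  have "L2norm h \<le> L2norm (\<lambda>x. h (x - a) - h (x - b)) + \<epsilon>"
    using R[OF ab(1)] L2norm_translate_diff_shift[OF h] by simp
  moreover have "L2norm (\<lambda>x. h (x - a) - h (x - b))
      \<le> L2norm (\<lambda>x. h (x - a) - g x) + L2norm (\<lambda>x. g x - h (x - b))"
    using h g by (intro L2norm_triangle L2_translate)
  ultimately show "L2norm h \<le> 2 * K + \<epsilon>"
    using ab(2,3) L2norm_minus_commute[of g "\<lambda>x. h (x - b)"] by linarith
qed

section \<open>Absolutely convergent combinations of time-frequency shifts\<close>

lemma ennreal_suminf_Cauchy_Schwarz: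
  fixes w a :: "nat \<Rightarrow> ennreal"
  shows "(\<Sum>n. w n * a n)\<^sup>2 \<le> (\<Sum>n. w n) * (\<Sum>n. w n * (a n)\<^sup>2)"
proof -
  let ?M = "density (count_space UNIV) w"
  have "(\<integral>\<^sup>+n. 1 * a n \<partial>?M)\<^sup>2 \<le> (\<integral>\<^sup>+n. 1 ^ 2 \<partial>?M) * (\<integral>\<^sup>+n. (a n)\<^sup>2 \<partial>?M)"
    by (rule Cauchy_Schwarz_nn_integral) auto
  then show ?thesis by (simp add: emeasure_density nn_integral_density nn_integral_count_space_nat)
qed

lemma nn_integral_weighted_translates_le:
  fixes w :: "nat \<Rightarrow> ennreal" and t :: "nat \<Rightarrow> 'a::euclidean_space"
  assumes h: "h \<in> borel_measurable lebesgue"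
  shows "(\<integral>\<^sup>+x. (\<Sum>n. w n * ennreal (cmod (h (x - t n))))\<^sup>2 \<partial>lebesgue) \<le> (\<Sum>n. w n)\<^sup>2 * L2sq h"
proof -
  let ?E = "\<lambda>n x. ennreal ((cmod (h (x - t n)))\<^sup>2)"
  have E: "?E n \<in> borel_measurable lebesgue" for n using h by measurable
  have "(\<integral>\<^sup>+x. (\<Sum>n. w n * ennreal (cmod (h (x - t n))))\<^sup>2 \<partial>lebesgue)
      \<le> (\<integral>\<^sup>+x. (\<Sum>n. w n) * (\<Sum>n. w n * ?E n x) \<partial>lebesgue)"
  proof (rule nn_integral_mono)
    fix x
    show "(\<Sum>n. w n * ennreal (cmod (h (x - t n))))\<^sup>2 \<le> (\<Sum>n. w n) * (\<Sum>n. w n * ?E n x)"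
      using ennreal_suminf_Cauchy_Schwarz[of w "\<lambda>n. ennreal (cmod (h (x - t n)))"]
      by (simp add: ennreal_power)
  qed
  also have "\<dots> = (\<Sum>n. w n) * (\<Sum>n. w n * (\<integral>\<^sup>+x. ?E n x \<partial>lebesgue))"
    using E by (simp add: nn_integral_cmult nn_integral_suminf)
  also have "\<dots> = (\<Sum>n. w n)\<^sup>2 * L2sq h"
    using L2sq_translate[OF h] by (simp add: L2sq_def ennreal_suminf_multc power2_eq_square mult.assoc)
  finally show ?thesis .
qed

lemma infinite_UNIV_euclidean: "infinite (UNIV :: 'a::euclidean_space set)"
proof
  assume fin: "finite (UNIV :: 'a set)"
  obtain u :: 'a where "u \<in> Basis" using nonempty_Basis by blast
  then have "u \<noteq> 0" by (simp add: nonzero_Basis)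
  then have "inj (\<lambda>r::real. r *\<^sub>R u)" by (auto intro: injI)
  then show False using fin infinite_UNIV_char_0 finite_imageD finite_subset by (metis subset_UNIV)
qed

lemma abs_summable_enumeration:
  fixes c :: "'b \<Rightarrow> 'c::real_normed_vector"
  assumes "(\<lambda>l. norm (c l)) summable_on UNIV" and "infinite (UNIV :: 'b set)"
  obtains g :: "nat \<Rightarrow> 'b"
  where "inj g" and "\<And>l. l \<notin> range g \<Longrightarrow> c l = 0" and "summable (\<lambda>n. norm (c (g n)))"
proof -
  obtain k :: "nat \<Rightarrow> 'b" where "inj k" using infinite_countable_subset[OF assms(2)] by blast
  define E where "E = {l. c l \<noteq> 0} \<union> range k"
  have "countable {l. c l \<noteq> 0}" using abs_summable_countable[OF assms(1)] by simp
  then have "countable E" "infinite E"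
    unfolding E_def using range_inj_infinite[OF \<open>inj k\<close>] by auto
  then have "bij_betw (from_nat_into E) UNIV E" by (rule bij_betw_from_nat_into)
  then have g: "inj (from_nat_into E)" "range (from_nat_into E) = E" by (auto simp: bij_betw_def)
  have "(\<lambda>l. norm (c l)) summable_on range (from_nat_into E)"
    using assms(1) by (rule summable_on_subset_banach) simp
  then have "(\<lambda>n. norm (c (from_nat_into E n))) summable_on UNIV"
    using summable_on_reindex[OF g(1), of "\<lambda>l. norm (c l)"] by (simp add: o_def)
  then have "summable (\<lambda>n. norm (c (from_nat_into E n)))"
    by (simp add: summable_on_UNIV_nonneg_real_iff)
  with g show ?thesis by (intro that) (auto simp: E_def)
qed

lemma infsum_nat_eq_suminf:
  fixes a :: "nat \<Rightarrow> 'b::banach"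
  assumes "summable (\<lambda>n. norm (a n))"
  shows "(\<Sum>\<^sub>\<infinity>n. a n) = (\<Sum>n. a n)"
  by (rule infsumI[OF norm_summable_imp_has_sum[OF assms summable_sums[OF summable_norm_cancel[OF assms]]]])

lemma norm_tf_shift: "cmod (tf_shift l f x) = cmod (f (x - fst l))"
  unfolding tf_shift_def by (simp add: norm_mult)

lemma l1_op_enumerated:
  assumes "inj g" and "\<And>l. l \<notin> range g \<Longrightarrow> c l = 0"
  shows "l1_op c f x = (\<Sum>\<^sub>\<infinity>n. c (g n) * tf_shift (g n) f x)"
proof -
  have "l1_op c f x = (\<Sum>\<^sub>\<infinity>l\<in>range g. c l * tf_shift l f x)"
    unfolding l1_op_def using assms(2) by (intro infsum_cong_neutral) auto
  also have "\<dots> = (\<Sum>\<^sub>\<infinity>n. c (g n) * tf_shift (g n) f x)"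
    using infsum_reindex[of g UNIV] assms(1) by (simp add: o_def)
  finally show ?thesis .
qed

lemma l1_op_cmult: "l1_op c (\<lambda>y. a * f y) x = a * l1_op c f x"
proof -
  have "l1_op c (\<lambda>y. a * f y) x = (\<Sum>\<^sub>\<infinity>l. a * (c l * tf_shift l f x))"
    unfolding l1_op_def tf_shift_def by (rule infsum_cong) (simp add: algebra_simps)
  also have "\<dots> = a * l1_op c f x" unfolding l1_op_def by (rule infsum_cmult_right')
  finally show ?thesis .
qed

lemma l1_op_translate:
  "l1_op c (\<lambda>y. f (y - \<nu>)) x = l1_op (\<lambda>l. c l * exp (\<i> * of_real (snd l \<bullet> \<nu>))) f (x - \<nu>)"
  unfolding l1_op_def
proof (rule infsum_cong)
  fix l :: "'a \<times> 'a"
  have "exp (\<i> * of_real (snd l \<bullet> \<nu>)) * exp (\<i> * of_real (snd l \<bullet> (x - \<nu>))) = exp (\<i> * of_real (snd l \<bullet> x))"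
    by (simp add: exp_add[symmetric] inner_diff_right algebra_simps)
  then show "c l * tf_shift l (\<lambda>y. f (y - \<nu>)) x = c l * exp (\<i> * of_real (snd l \<bullet> \<nu>)) * tf_shift l f (x - \<nu>)"
    unfolding tf_shift_def by (simp add: algebra_simps)
qed

lemma norm_l1_op_phase_diff_le:
  assumes g: "inj g" "\<And>l. l \<notin> range g \<Longrightarrow> c l = 0"
    and p: "\<And>l. cmod (p l) \<le> 1"
    and fin: "(\<Sum>n. ennreal (cmod (c (g n))) * ennreal (cmod (f (y - fst (g n))))) \<noteq> \<infinity>"
  shows "ennreal (cmod (l1_op (\<lambda>l. c l * p l) f y - l1_op c f y))
    \<le> (\<Sum>n. ennreal (cmod (c (g n)) * cmod (p (g n) - 1)) * ennreal (cmod (f (y - fst (g n)))))"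
proof -
  define a where "a n = c (g n) * tf_shift (g n) f y" for n
  define b where "b n = c (g n) * p (g n) * tf_shift (g n) f y" for n
  have norm_a: "norm (a n) = cmod (c (g n)) * cmod (f (y - fst (g n)))" for n
    by (simp add: a_def norm_mult norm_tf_shift)
  have sa: "summable (\<lambda>n. norm (a n))"
    using fin by (intro summable_suminf_not_top) (auto simp: norm_a ennreal_mult)
  have b_le_a: "norm (b n) \<le> norm (a n)" for n
  proof -
    have "cmod (c (g n)) * cmod (p (g n)) \<le> cmod (c (g n))"
      using p[of "g n"] by (simp add: mult_left_le)
    then show ?thesis by (simp add: a_def b_def norm_mult mult_right_mono)
  qed
  have sb: "summable (\<lambda>n. norm (b n))"
    by (rule summable_comparison_test'[OF sa]) (simp add: b_le_a)
  define d where "d n = cmod (c (g n)) * cmod (p (g n) - 1) * cmod (f (y - fst (g n)))" for n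
  have d: "d n = norm (b n - a n)" for n
  proof -
    have "b n - a n = c (g n) * (p (g n) - 1) * tf_shift (g n) f y"
      by (simp add: a_def b_def algebra_simps)
    then show ?thesis by (simp add: d_def norm_mult norm_tf_shift)
  qed
  have sd: "summable d"
    unfolding d by (rule summable_comparison_test'[OF summable_add[OF sb sa]]) (simp add: norm_triangle_ineq4)
  have "l1_op (\<lambda>l. c l * p l) f y - l1_op c f y = (\<Sum>n. b n) - (\<Sum>n. a n)"
    using g sa sb by (simp add: l1_op_enumerated infsum_nat_eq_suminf a_def b_def)
  also have "\<dots> = (\<Sum>n. b n - a n)"
    using suminf_diff[OF summable_norm_cancel[OF sb] summable_norm_cancel[OF sa]] by simp
  finally have "ennreal (cmod (l1_op (\<lambda>l. c l * p l) f y - l1_op c f y)) \<le> ennreal (\<Sum>n. d n)"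
    using summable_norm[of "\<lambda>n. b n - a n"] sd unfolding d by (simp add: ennreal_leI)
  also have "\<dots> = (\<Sum>n. ennreal (d n))"
    using sd unfolding d_def by (intro suminf_ennreal2[symmetric]) auto
  also have "\<dots> = (\<Sum>n. ennreal (cmod (c (g n)) * cmod (p (g n) - 1)) * ennreal (cmod (f (y - fst (g n)))))"
    unfolding d_def by (intro suminf_cong) (simp add: ennreal_mult)
  finally show ?thesis .
qed

text \<open>Moving the translation by \<open>\<nu>\<close> past \<open>U_(t,\<omega>)\<close> produces the phase \<open>exp(i <\<omega>,\<nu>>)\<close>, so the
  commutator is dominated by a sum of translates of \<open>|f|\<close> weighted by \<open>|c_l| |exp(i <\<omega>,\<nu>>) - 1|\<close>.
  This needs the series weighted by \<open>|c_l|\<close> alone to converge, which it does almost everywhere.\<close>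
lemma AE_norm_l1_op_translate_commutator_le:
  fixes c :: "'a::euclidean_space \<times> 'a \<Rightarrow> complex"
  assumes g: "inj g" "\<And>l. l \<notin> range g \<Longrightarrow> c l = 0" "summable (\<lambda>n. cmod (c (g n)))"
    and f: "f \<in> L2"
  shows "AE x in lebesgue. ennreal (cmod (l1_op c (\<lambda>y. f (y - \<nu>)) x - l1_op c f (x - \<nu>)))
    \<le> (\<Sum>n. ennreal (cmod (c (g n)) * cmod (exp (\<i> * of_real (snd (g n) \<bullet> \<nu>)) - 1))
          * ennreal (cmod (f (x - (\<nu> + fst (g n))))))"
proof -
  define M where "M x = (\<Sum>n. ennreal (cmod (c (g n))) * ennreal (cmod (f (x - (\<nu> + fst (g n))))))" for x
  have fm: "f \<in> borel_measurable lebesgue" using f by (rule L2_imp_measurable)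
  have M_meas: "(\<lambda>x. (M x)\<^sup>2) \<in> borel_measurable lebesgue"
    unfolding M_def using fm by measurable
  have "(\<integral>\<^sup>+x. (M x)\<^sup>2 \<partial>lebesgue) \<le> (\<Sum>n. ennreal (cmod (c (g n))))\<^sup>2 * L2sq f"
    unfolding M_def by (rule nn_integral_weighted_translates_le[OF fm])
  also have "\<dots> < \<infinity>"
    using f g(3) by (simp add: L2_iff_L2sq suminf_ennreal2 power2_eq_square ennreal_mult_less_top)
  finally have "(\<integral>\<^sup>+x. (M x)\<^sup>2 \<partial>lebesgue) \<noteq> \<infinity>" by simp
  with M_meas have "AE x in lebesgue. (M x)\<^sup>2 \<noteq> \<infinity>"
    by (rule nn_integral_PInf_AE)
  then show ?thesis
  proof eventually_elim
    case (elim x)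
    then have "(\<Sum>n. ennreal (cmod (c (g n))) * ennreal (cmod (f (x - \<nu> - fst (g n))))) \<noteq> \<infinity>"
      by (simp add: M_def diff_diff_eq power2_eq_square ennreal_mult_eq_top_iff)
    then have "ennreal (cmod (l1_op c (\<lambda>y. f (y - \<nu>)) x - l1_op c f (x - \<nu>)))
        \<le> (\<Sum>n. ennreal (cmod (c (g n)) * cmod (exp (\<i> * of_real (snd (g n) \<bullet> \<nu>)) - 1))
              * ennreal (cmod (f (x - \<nu> - fst (g n)))))"
      unfolding l1_op_translate by (intro norm_l1_op_phase_diff_le[OF g(1,2)]) simp_all
    then show ?case by (simp add: diff_diff_eq)
  qed
qed

lemma L2norm_l1_op_translate_commutator_le:
  fixes c :: "'a::euclidean_space \<times> 'a \<Rightarrow> complex"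
  assumes g: "inj g" "\<And>l. l \<notin> range g \<Longrightarrow> c l = 0" "summable (\<lambda>n. cmod (c (g n)))"
    and f: "f \<in> L2"
    and meas: "(\<lambda>x. l1_op c (\<lambda>y. f (y - \<nu>)) x - l1_op c f (x - \<nu>)) \<in> borel_measurable lebesgue"
  shows "L2norm (\<lambda>x. l1_op c (\<lambda>y. f (y - \<nu>)) x - l1_op c f (x - \<nu>))
    \<le> (\<Sum>n. cmod (c (g n)) * cmod (exp (\<i> * of_real (snd (g n) \<bullet> \<nu>)) - 1)) * L2norm f"
proof -
  define w where "w = (\<lambda>n. cmod (c (g n)) * cmod (exp (\<i> * of_real (snd (g n) \<bullet> \<nu>)) - 1))"
  have w: "0 \<le> w n" "w n \<le> 2 * cmod (c (g n))" for n
  proof -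
    have "cmod (exp (\<i> * of_real (snd (g n) \<bullet> \<nu>)) - 1) \<le> 2"
      using norm_triangle_ineq4[of "exp (\<i> * of_real (snd (g n) \<bullet> \<nu>))" 1] by simp
    then have "cmod (c (g n)) * cmod (exp (\<i> * of_real (snd (g n) \<bullet> \<nu>)) - 1) \<le> cmod (c (g n)) * 2"
      by (rule mult_left_mono) simp
    then show "0 \<le> w n" "w n \<le> 2 * cmod (c (g n))" by (simp_all add: w_def mult.commute)
  qed
  have "summable (\<lambda>n. 2 * cmod (c (g n)))" using g(3) by (rule summable_mult)
  then have "summable w" by (rule summable_comparison_test') (use w in simp)
  have "AE x in lebesgue. ennreal (cmod (l1_op c (\<lambda>y. f (y - \<nu>)) x - l1_op c f (x - \<nu>)))
      \<le> (\<Sum>n. ennreal (w n) * ennreal (cmod (f (x - (\<nu> + fst (g n))))))"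
    unfolding w_def by (rule AE_norm_l1_op_translate_commutator_le[OF g f])
  then have "AE x in lebesgue. ennreal ((cmod (l1_op c (\<lambda>y. f (y - \<nu>)) x - l1_op c f (x - \<nu>)))\<^sup>2)
      \<le> (\<Sum>n. ennreal (w n) * ennreal (cmod (f (x - (\<nu> + fst (g n))))))\<^sup>2"
    by eventually_elim (simp add: ennreal_power[symmetric] power_mono)
  then have "L2sq (\<lambda>x. l1_op c (\<lambda>y. f (y - \<nu>)) x - l1_op c f (x - \<nu>))
      \<le> (\<integral>\<^sup>+x. (\<Sum>n. ennreal (w n) * ennreal (cmod (f (x - (\<nu> + fst (g n))))))\<^sup>2 \<partial>lebesgue)"
    unfolding L2sq_def by (rule nn_integral_mono_AE)
  also have "\<dots> \<le> (\<Sum>n. ennreal (w n))\<^sup>2 * L2sq f"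
    using f by (intro nn_integral_weighted_translates_le L2_imp_measurable)
  also have "\<dots> = ennreal (((\<Sum>n. w n) * L2norm f)\<^sup>2)"
  proof -
    have "0 \<le> (\<Sum>n. w n)" using \<open>summable w\<close> w(1) by (rule suminf_nonneg)
    then show ?thesis
      using \<open>summable w\<close> w(1) f
      by (simp add: suminf_ennreal2 L2sq_eq_L2norm ennreal_power power_mult_distrib ennreal_mult)
  qed
  finally have "L2norm (\<lambda>x. l1_op c (\<lambda>y. f (y - \<nu>)) x - l1_op c f (x - \<nu>)) \<le> \<bar>(\<Sum>n. w n) * L2norm f\<bar>"
    by (rule L2sq_le_imp_L2norm_le(2)[OF meas])
  then show ?thesis
    using suminf_nonneg[OF \<open>summable w\<close> w(1)] L2norm_nonneg[of f] by (simp add: w_def abs_mult)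
qed

section \<open>Simultaneous Diophantine approximation of the phases\<close>

lemma norm_cis_minus_one_le: "cmod (cis y - 1) \<le> \<bar>y\<bar>"
proof -
  have "(cmod (cis y - 1))\<^sup>2 = (cos y - 1)\<^sup>2 + (sin y)\<^sup>2" by (simp add: cmod_power2)
  also have "\<dots> = 2 - 2 * cos y" using sin_cos_squared_add[of y] by (simp add: power2_diff)
  also have "\<dots> = 4 * (sin (y/2))\<^sup>2" using cos_double_sin[of "y/2"] by simp
  also have "\<dots> \<le> 4 * (y/2)\<^sup>2"
    using abs_sin_x_le_abs_x[of "y/2"] abs_le_square_iff by fastforce
  also have "\<dots> = \<bar>y\<bar>\<^sup>2" by (simp add: power2_eq_square)
  finally show ?thesis by (rule power2_le_imp_le) simp
qed

text \<open>The witness is \<open>\<nu> = q M u\<close> for a unit basis vector \<open>u\<close>, where \<open>q\<close> comes from Dirichlet's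
  simultaneous approximation of the numbers \<open>M (\<theta>\<^sub>i \<bullet> u) / 2\<pi>\<close> by integers.\<close>
lemma far_vector_with_small_phases:
  fixes \<theta> :: "nat \<Rightarrow> 'a::euclidean_space"
  assumes "\<delta> > 0"
  obtains \<nu> :: 'a where "L \<le> norm \<nu>" "\<And>i. i < N \<Longrightarrow> cmod (exp (\<i> * of_real (\<theta> i \<bullet> \<nu>)) - 1) \<le> \<delta>"
proof -
  obtain u :: 'a where u: "u \<in> Basis" using nonempty_Basis by blast
  define M where "M = max L 1"
  obtain K :: nat where K: "2 * pi / \<delta> < real K" using reals_Archimedean2 by blast
  moreover have "0 < 2 * pi / \<delta>" using assms by simp
  ultimately have "0 < real K" by linarith
  then have "K > 0" by simp
  then have K_le: "2 * pi / real K \<le> \<delta>" using K assms by (simp add: field_simps)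
  define th where "th i = M * (\<theta> i \<bullet> u) / (2 * pi)" for i
  obtain q p where q: "0 < q" and qp: "\<And>i. i < N \<Longrightarrow> \<bar>of_int q * th i - of_int (p i)\<bar> < 1 / K"
    using Dirichlet_approx_simult[OF \<open>K > 0\<close>, where \<theta>=th and n=N] by blast
  define \<nu> where "\<nu> = (real_of_int q * M) *\<^sub>R u"
  show ?thesis
  proof
    have "1 \<le> real_of_int q" "1 \<le> M" using q by (auto simp: M_def)
    then have "M \<le> real_of_int q * M" using mult_right_mono[of 1 "real_of_int q" M] by simp
    then show "L \<le> norm \<nu>"
      using u \<open>1 \<le> M\<close> by (simp add: \<nu>_def M_def)
  next
    fix i assume i: "i < N"
    define d where "d = of_int q * th i - of_int (p i)"
    have eq: "\<theta> i \<bullet> \<nu> = 2 * pi * d + 2 * pi * of_int (p i)"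
      unfolding \<nu>_def d_def th_def by (simp add: field_simps inner_commute)
    have "exp (\<i> * of_real (\<theta> i \<bullet> \<nu>)) = cis (\<theta> i \<bullet> \<nu>)" by (simp add: cis_conv_exp)
    also have "\<dots> = cis (2 * pi * d) * cis (2 * pi * of_int (p i))"
      unfolding eq by (rule cis_mult[symmetric])
    also have "cis (2 * pi * of_int (p i)) = 1" by (simp add: cis_multiple_2pi)
    finally have "cmod (exp (\<i> * of_real (\<theta> i \<bullet> \<nu>)) - 1) \<le> 2 * pi * \<bar>d\<bar>"
      using norm_cis_minus_one_le[of "2 * pi * d"] by (simp add: abs_mult)
    also have "\<dots> \<le> 2 * pi * (1 / K)" using qp[OF i] by (intro mult_left_mono) (auto simp: d_def)
    finally show "cmod (exp (\<i> * of_real (\<theta> i \<bullet> \<nu>)) - 1) \<le> \<delta>"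
      using K_le by simp
  qed
qed

lemma suminf_mult_le_head_tail:
  fixes w q :: "nat \<Rightarrow> real"
  assumes w: "\<And>n. 0 \<le> w n" "summable w"
    and q: "\<And>n. 0 \<le> q n" "\<And>n. q n \<le> 2" "\<And>i. i < N \<Longrightarrow> q i \<le> \<delta>"
    and "0 \<le> \<delta>"
  shows "(\<Sum>n. w n * q n) \<le> \<delta> * (\<Sum>n. w n) + 2 * (\<Sum>n. w (n + N))"
proof -
  have wq_le: "w n * q n \<le> 2 * w n" for n
    using mult_left_mono[OF q(2) w(1)] by (simp add: mult.commute)
  have wq: "summable (\<lambda>n. w n * q n)"
    by (rule summable_comparison_test'[of "\<lambda>n. 2 * w n" 0]) (use w q wq_le in \<open>auto intro!: summable_mult\<close>)
  have "(\<Sum>n. w n * q n) = (\<Sum>n. w (n + N) * q (n + N)) + (\<Sum>i<N. w i * q i)"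
    by (rule suminf_split_initial_segment[OF wq])
  also have "(\<Sum>i<N. w i * q i) \<le> \<delta> * (\<Sum>i<N. w i)"
    unfolding sum_distrib_left by (rule sum_mono) (use w q in \<open>auto simp: mult.commute intro: mult_right_mono\<close>)
  also have "\<dots> \<le> \<delta> * (\<Sum>n. w n)"
    using \<open>0 \<le> \<delta>\<close> w by (intro mult_left_mono sum_le_suminf) auto
  also have "(\<Sum>n. w (n + N) * q (n + N)) \<le> (\<Sum>n. 2 * w (n + N))"
    using wq_le summable_ignore_initial_segment[OF wq] summable_ignore_initial_segment[OF w(2)]
    by (intro suminf_le summable_mult) auto
  also have "\<dots> = 2 * (\<Sum>n. w (n + N))"
    using summable_ignore_initial_segment[OF w(2)] by (rule suminf_mult)
  finally show ?thesis by linarith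
qed

lemma far_vector_with_small_phase_defect:
  fixes w :: "nat \<Rightarrow> real" and \<theta> :: "nat \<Rightarrow> 'a::euclidean_space"
  assumes w: "\<And>n. 0 \<le> w n" "summable w" and "e > 0"
  obtains \<nu> :: 'a where "L \<le> norm \<nu>" "(\<Sum>n. w n * cmod (exp (\<i> * of_real (\<theta> n \<bullet> \<nu>)) - 1)) \<le> 3 * e"
proof -
  obtain N where "\<forall>n\<ge>N. norm (\<Sum>i. w (i + n)) < e"
    using suminf_exist_split[OF \<open>e > 0\<close> w(2)] by blast
  then have tail: "(\<Sum>i. w (i + N)) \<le> e" by fastforce
  define \<delta> where "\<delta> = e / ((\<Sum>n. w n) + 1)"
  have "0 \<le> (\<Sum>n. w n)" using w by (rule suminf_nonneg[rotated])
  then have "\<delta> > 0" "\<delta> * (\<Sum>n. w n) \<le> e"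
    using \<open>e > 0\<close> by (auto simp: \<delta>_def field_simps)
  obtain \<nu> :: 'a where \<nu>: "L \<le> norm \<nu>" "\<And>i. i < N \<Longrightarrow> cmod (exp (\<i> * of_real (\<theta> i \<bullet> \<nu>)) - 1) \<le> \<delta>"
    using far_vector_with_small_phases[OF \<open>\<delta> > 0\<close>] by blast
  have "(\<Sum>n. w n * cmod (exp (\<i> * of_real (\<theta> n \<bullet> \<nu>)) - 1)) \<le> \<delta> * (\<Sum>n. w n) + 2 * (\<Sum>n. w (n + N))"
  proof (rule suminf_mult_le_head_tail[OF w])
    show "cmod (exp (\<i> * of_real (\<theta> n \<bullet> \<nu>)) - 1) \<le> 2" for n
      using norm_triangle_ineq4[of "exp (\<i> * of_real (\<theta> n \<bullet> \<nu>))" 1] by simp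
  qed (use \<nu>(2) \<open>\<delta> > 0\<close> in auto)
  with \<nu>(1) tail \<open>\<delta> * (\<Sum>n. w n) \<le> e\<close> show ?thesis by (intro that) auto
qed

section \<open>Compact operators in the closure\<close>

definition l1_op_approx ::
    "(('a::euclidean_space \<Rightarrow> complex) \<Rightarrow> ('a \<Rightarrow> complex)) \<Rightarrow> ('a \<times> 'a \<Rightarrow> complex) \<Rightarrow> real \<Rightarrow> bool" where
  "l1_op_approx T c e \<longleftrightarrow>
     (\<forall>h\<in>L2. T h \<in> L2 \<and> l1_op c h \<in> L2 \<and> L2norm (\<lambda>x. T h x - l1_op c h x) \<le> e * L2norm h)"

lemma in_A_imp_l1_op_approx:
  assumes "in_A T" "e > 0"
  obtains c where "(\<lambda>l. norm (c l)) summable_on UNIV" "l1_op_approx T c e"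
proof -
  obtain c where c: "(\<lambda>l. norm (c l)) summable_on UNIV"
    and approx: "\<And>h. h \<in> L2 \<Longrightarrow> (\<lambda>x. T h x - l1_op c h x) \<in> L2 \<and> L2norm (\<lambda>x. T h x - l1_op c h x) \<le> e * L2norm h"
    using assms unfolding in_A_def by blast
  have "l1_op c h \<in> L2" if "h \<in> L2" for h
    using L2_diff[of "T h" "\<lambda>x. T h x - l1_op c h x"] assms(1) approx[OF that] that
    by (simp add: in_A_def)
  with c approx assms(1) show ?thesis by (intro that) (auto simp: l1_op_approx_def in_A_def)
qed

lemma far_translate_almost_commutes:
  fixes T :: "('a::euclidean_space \<Rightarrow> complex) \<Rightarrow> ('a \<Rightarrow> complex)"
  assumes approx: "l1_op_approx T c e" and c: "(\<lambda>l. norm (c l)) summable_on UNIV"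
    and "e > 0" and f: "f \<in> L2"
  obtains \<nu> :: 'a where "L \<le> norm \<nu>"
    and "L2norm (\<lambda>x. T (\<lambda>y. f (y - \<nu>)) x - l1_op c f (x - \<nu>)) \<le> 4 * e * L2norm f"
proof -
  have "infinite (UNIV :: ('a \<times> 'a) set)" by (simp add: finite_prod infinite_UNIV_euclidean)
  then obtain g where g: "inj g" "\<And>l. l \<notin> range g \<Longrightarrow> c l = 0" "summable (\<lambda>n. cmod (c (g n)))"
    using abs_summable_enumeration[OF c] by blast
  obtain \<nu> :: 'a where \<nu>: "L \<le> norm \<nu>"
    "(\<Sum>n. cmod (c (g n)) * cmod (exp (\<i> * of_real (snd (g n) \<bullet> \<nu>)) - 1)) \<le> 3 * e"
    using far_vector_with_small_phase_defect[where \<theta> = "\<lambda>n. snd (g n)" and L = L, OF _ g(3) \<open>e > 0\<close>]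
    by auto
  define f\<^sub>\<nu> where "f\<^sub>\<nu> = (\<lambda>y. f (y - \<nu>))"
  have f\<^sub>\<nu>: "f\<^sub>\<nu> \<in> L2" "L2norm f\<^sub>\<nu> = L2norm f" unfolding f\<^sub>\<nu>_def using f by (auto simp: L2_translate L2norm_translate)
  have T: "T f\<^sub>\<nu> \<in> L2" "l1_op c f\<^sub>\<nu> \<in> L2" "L2norm (\<lambda>x. T f\<^sub>\<nu> x - l1_op c f\<^sub>\<nu> x) \<le> e * L2norm f"
    using approx f\<^sub>\<nu> by (auto simp: l1_op_approx_def)
  have S: "(\<lambda>x. l1_op c f (x - \<nu>)) \<in> L2"
    using approx f by (auto simp: l1_op_approx_def intro: L2_translate)
  have "L2norm (\<lambda>x. l1_op c f\<^sub>\<nu> x - l1_op c f (x - \<nu>))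
      \<le> (\<Sum>n. cmod (c (g n)) * cmod (exp (\<i> * of_real (snd (g n) \<bullet> \<nu>)) - 1)) * L2norm f"
    unfolding f\<^sub>\<nu>_def using T(2) S f
    by (intro L2norm_l1_op_translate_commutator_le[OF g] L2_imp_measurable L2_diff) (auto simp: f\<^sub>\<nu>_def)
  also have "\<dots> \<le> 3 * e * L2norm f" using \<nu>(2) L2norm_nonneg[of f] by (rule mult_right_mono)
  finally have "L2norm (\<lambda>x. T f\<^sub>\<nu> x - l1_op c f (x - \<nu>)) \<le> e * L2norm f + 3 * e * L2norm f"
    using L2norm_triangle[OF T(1,2) S] T(3) by linarith
  with \<nu>(1) show ?thesis by (intro that) (auto simp: f\<^sub>\<nu>_def)
qed

text \<open>A limit point of \<open>T (f (\<cdot> - \<nu>\<^sub>j))\<close>, \<open>|\<nu>\<^sub>j| \<rightarrow> \<infinity>\<close>, is close to arbitrarily far-apart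
  translates of \<open>h\<close>.\<close>
lemma compact_op_far_translates_bound:
  fixes T :: "('a::euclidean_space \<Rightarrow> complex) \<Rightarrow> ('a \<Rightarrow> complex)"
  assumes T: "compact_op T" "\<And>h. h \<in> L2 \<Longrightarrow> T h \<in> L2"
    and f: "f \<in> L2" "L2norm f \<le> 1" and h: "h \<in> L2"
    and far: "\<And>L. \<exists>\<nu>. L \<le> norm \<nu> \<and> L2norm (\<lambda>x. T (\<lambda>y. f (y - \<nu>)) x - h (x - \<nu>)) \<le> K"
  shows "L2norm h \<le> 2 * K"
proof (rule field_le_epsilon)
  fix \<epsilon> :: real assume "\<epsilon> > 0"
  have "\<forall>j::nat. \<exists>\<nu>. real j \<le> norm \<nu> \<and> L2norm (\<lambda>x. T (\<lambda>y. f (y - \<nu>)) x - h (x - \<nu>)) \<le> K"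
    using far by blast
  then obtain \<nu> :: "nat \<Rightarrow> 'a"
    where \<nu>: "\<And>j. real j \<le> norm (\<nu> j)" "\<And>j. L2norm (\<lambda>x. T (\<lambda>y. f (y - \<nu> j)) x - h (x - \<nu> j)) \<le> K"
    by (auto simp: choice_iff)
  define F where "F j = (\<lambda>y. f (y - \<nu> j))" for j
  have F: "F j \<in> L2" "L2norm (F j) \<le> 1" for j
    using f by (auto simp: F_def L2_translate L2norm_translate)
  then obtain r g where r: "strict_mono r" and g: "g \<in> L2"
    and lim: "(\<lambda>n. L2norm (\<lambda>x. T (F (r n)) x - g x)) \<longlonglongrightarrow> 0"
    using T(1) unfolding compact_op_def by blast
  have "\<epsilon> / 2 > 0" using \<open>\<epsilon> > 0\<close> by simp
  with lim obtain N where "\<forall>n\<ge>N. dist (L2norm (\<lambda>x. T (F (r n)) x - g x)) 0 < \<epsilon> / 2"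
    unfolding lim_sequentially by blast
  then have N: "\<And>n. N \<le> n \<Longrightarrow> L2norm (\<lambda>x. T (F (r n)) x - g x) < \<epsilon> / 2"
    by (simp add: L2norm_nonneg)
  have close: "L2norm (\<lambda>x. h (x - \<nu> (r n)) - g x) \<le> K + \<epsilon> / 2" if "N \<le> n" for n
    using L2norm_triangle[OF L2_translate[OF h] T(2)[OF F(1)] g, of "\<nu> (r n)" "r n"]
      L2norm_minus_commute[of "T (F (r n))" "\<lambda>x. h (x - \<nu> (r n))"] \<nu>(2)[of "r n"] N[OF that]
    unfolding F_def by linarith
  have "L2norm h \<le> 2 * (K + \<epsilon> / 2)"
  proof (rule far_translates_near_imp_L2norm_le[OF h g])
    fix R
    define m where "m = N + nat \<lceil>norm (\<nu> (r N)) + R\<rceil> + 1"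
    have "real m \<le> norm (\<nu> (r m))" using seq_suble[OF r, of m] \<nu>(1)[of "r m"] by linarith
    then have "R < norm (\<nu> (r m) - \<nu> (r N))"
      using norm_triangle_ineq2[of "\<nu> (r m)" "\<nu> (r N)"] unfolding m_def by linarith
    with close[of m] close[of N] show "\<exists>a b. R < norm (a - b) \<and>
        L2norm (\<lambda>x. h (x - a) - g x) \<le> K + \<epsilon> / 2 \<and> L2norm (\<lambda>x. h (x - b) - g x) \<le> K + \<epsilon> / 2"
      unfolding m_def by auto
  qed
  then show "L2norm h \<le> 2 * K + \<epsilon>" by simp
qed

lemma L2norm_l1_op_le:
  fixes T :: "('a::euclidean_space \<Rightarrow> complex) \<Rightarrow> ('a \<Rightarrow> complex)"
  assumes "compact_op T" and approx: "l1_op_approx T c e" "(\<lambda>l. norm (c l)) summable_on UNIV"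
    and "e > 0" and f: "f \<in> L2"
  shows "L2norm (l1_op c f) \<le> 8 * e * (L2norm f + 1)"
proof -
  \<comment> \<open>\<open>compact_op\<close> only speaks about the unit ball and \<open>T\<close> need not be linear, so it is \<open>f\<close>
    that is rescaled, using the linearity of \<open>l1_op c\<close>.\<close>
  define \<alpha> where "\<alpha> = L2norm f + 1"
  have "\<alpha> > 0" using L2norm_nonneg[of f] by (simp add: \<alpha>_def)
  define f' where "f' = (\<lambda>x. complex_of_real (1 / \<alpha>) * f x)"
  have f': "f' \<in> L2" "L2norm f' \<le> 1"
  proof -
    show "f' \<in> L2" unfolding f'_def using f by (rule L2_cmult)
    have "L2norm f' = L2norm f / \<alpha>"
      unfolding f'_def L2norm_cmult using \<open>\<alpha> > 0\<close> by (simp add: norm_divide)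
    then show "L2norm f' \<le> 1" using \<open>\<alpha> > 0\<close> by (simp add: \<alpha>_def)
  qed
  have "L2norm (l1_op c f') \<le> 2 * (4 * e)"
  proof (rule compact_op_far_translates_bound[OF \<open>compact_op T\<close> _ f'])
    show "T h \<in> L2" if "h \<in> L2" for h using approx(1) that by (simp add: l1_op_approx_def)
    show "l1_op c f' \<in> L2" using approx(1) f'(1) by (simp add: l1_op_approx_def)
    show "\<exists>\<nu>. L \<le> norm \<nu> \<and> L2norm (\<lambda>x. T (\<lambda>y. f' (y - \<nu>)) x - l1_op c f' (x - \<nu>)) \<le> 4 * e" for L
    proof -
      obtain \<nu> where "L \<le> norm \<nu>" "L2norm (\<lambda>x. T (\<lambda>y. f' (y - \<nu>)) x - l1_op c f' (x - \<nu>)) \<le> 4 * e * L2norm f'"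
        using far_translate_almost_commutes[OF approx \<open>e > 0\<close> f'(1)] by blast
      moreover have "4 * e * L2norm f' \<le> 4 * e" using f'(2) \<open>e > 0\<close> by simp
      ultimately show ?thesis by force
    qed
  qed
  moreover have "l1_op c f = (\<lambda>x. complex_of_real \<alpha> * l1_op c f' x)"
  proof
    fix x
    have "f = (\<lambda>y. complex_of_real \<alpha> * f' y)" using \<open>\<alpha> > 0\<close> by (simp add: f'_def)
    then show "l1_op c f x = complex_of_real \<alpha> * l1_op c f' x" by (simp only: l1_op_cmult)
  qed
  ultimately show ?thesis using \<open>\<alpha> > 0\<close> by (simp add: L2norm_cmult \<alpha>_def)
qed

lemma L2norm_apply_le:
  assumes "in_A T" "compact_op T" "f \<in> L2" "e > 0"
  shows "L2norm (T f) \<le> (L2norm f + 8 * (L2norm f + 1)) * e"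
proof -
  obtain c where c: "(\<lambda>l. norm (c l)) summable_on UNIV" "l1_op_approx T c e"
    using in_A_imp_l1_op_approx[OF assms(1,4)] by blast
  then have "T f \<in> L2" "l1_op c f \<in> L2" "L2norm (\<lambda>x. T f x - l1_op c f x) \<le> e * L2norm f"
    using assms(3) by (auto simp: l1_op_approx_def)
  moreover have "L2norm (l1_op c f) \<le> 8 * e * (L2norm f + 1)"
    using L2norm_l1_op_le[OF assms(2) c(2,1) assms(4,3)] .
  ultimately show ?thesis
    using L2norm_add_le[of "\<lambda>x. T f x - l1_op c f x" "l1_op c f"] by (simp add: L2_diff algebra_simps)
qed

theorem corollary5:
  fixes T :: "('a::euclidean_space \<Rightarrow> complex) \<Rightarrow> ('a \<Rightarrow> complex)"
  assumes "in_A T" and "compact_op T"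
  shows "\<forall>f\<in>L2. AE x in lebesgue. T f x = 0"
proof
  fix f :: "'a \<Rightarrow> complex" assume f: "f \<in> L2"
  define C where "C = L2norm f + 8 * (L2norm f + 1)"
  have "C > 0" using L2norm_nonneg[of f] by (simp add: C_def)
  have "L2norm (T f) \<le> 0"
  proof (rule field_le_epsilon)
    fix \<epsilon> :: real assume "\<epsilon> > 0"
    then have "L2norm (T f) \<le> C * (\<epsilon> / C)"
      unfolding C_def using \<open>C > 0\<close> by (intro L2norm_apply_le[OF assms f]) (simp add: C_def)
    then show "L2norm (T f) \<le> 0 + \<epsilon>" using \<open>C > 0\<close> by simp
  qed
  moreover have "T f \<in> L2" using assms(1) f by (simp add: in_A_def)
  ultimately show "AE x in lebesgue. T f x = 0"
    using L2norm_nonneg[of "T f"] by (simp add: L2norm_eq_0_iff[symmetric])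
qed

end
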